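(* Let $X$ be a Baire topological space, $Y$ a metric space and $\mathcal F\subseteq Y^X$. (1) If $\mathcal F$ is equi-GLP, then $\mathcal F$ is equi-cliquish. (2) If $X$ is a metric space and $\mathcal F$ is equi-Baire 1, then $\mathcal F$ is equi-cliquish.
   Context: A space is Baire if every nonempty open subset is nonmeager. A family of subsets of $X$ is discrete if each point has a neighborhood meeting at most one member; $\sigma$-discrete if it is a countable union of discrete families. $\mathcal F\subseteq Y^X$ (with $(Y,d)$ metric) is equi-GLP if for every $\varepsilon>0$ there is a $\sigma$-discrete family $\mathcal A_\varepsilon$ of closed subsets of $X$ with $X=\bigcup\mathcal A_\varepsilon$ and $\operatorname{diam}f(A)\le\varepsilon$ for all $A\in\mathcal A_\varepsilon$ and all $f\in\mathcal F$; equi-cliquish if for every $\varepsilon>0$ and every nonempty open $U\subseteq X$ there is a nonempty open $O\subseteq U$ with $\operatorname{diam}f(O)<\varepsilon$ for all $f\in\mathcal F$; for $X$ metric with metric $\rho$, equi-Baire 1 if for every $\varepsilon>0$ there is $\delta_\varepsilon\colon X\to(0,\infty)$ such that for all $x,y\in X$ and $f\in\mathcal F$, $\rho(x,y)<\min\{\delta_\varepsilon(x),\delta_\varepsilon(y)\}$ implies $d(f(x),f(y))<\varepsilon$. *)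

theory Defs
  imports "HOL-Analysis.Analysis"
begin

definition nowhere_dense :: "'a::topological_space set \<Rightarrow> bool" where
  "nowhere_dense A \<longleftrightarrow> interior (closure A) = {}"

definition meager :: "'a::topological_space set \<Rightarrow> bool" where
  "meager A \<longleftrightarrow> (\<exists>\<N>. countable \<N> \<and> (\<forall>N\<in>\<N>. nowhere_dense N) \<and> A = \<Union>\<N>)"

definition baire_space :: "'a::topological_space itself \<Rightarrow> bool" where
  "baire_space _ \<longleftrightarrow> (\<forall>U::'a set. open U \<and> U \<noteq> {} \<longrightarrow> \<not> meager U)"

definition discrete_family :: "'a::topological_space set set \<Rightarrow> bool" where
  "discrete_family \<A> \<longleftrightarrow>
     (\<forall>x. \<exists>U. open U \<and> x \<in> U \<and>
        (\<forall>A\<in>\<A>. \<forall>B\<in>\<A>. A \<inter> U \<noteq> {} \<and> B \<inter> U \<noteq> {} \<longrightarrow> A = B))"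

definition sigma_discrete :: "'a::topological_space set set \<Rightarrow> bool" where
  "sigma_discrete \<A> \<longleftrightarrow> (\<exists>D::nat \<Rightarrow> 'a set set. (\<forall>n. discrete_family (D n)) \<and> \<A> = (\<Union>n. D n))"

text \<open>Diameter with values in the extended reals (sup of distances; -\<infinity> for the empty set,
  \<infinity> for unbounded sets).\<close>

definition ediam :: "'b::metric_space set \<Rightarrow> ereal" where
  "ediam S = (SUP p\<in>S \<times> S. ereal (dist (fst p) (snd p)))"

definition equi_GLP :: "('a::topological_space \<Rightarrow> 'b::metric_space) set \<Rightarrow> bool" where
  "equi_GLP \<F> \<longleftrightarrow>
     (\<forall>\<epsilon>>0. \<exists>\<A>. sigma_discrete \<A> \<and> (\<forall>A\<in>\<A>. closed A) \<and> \<Union>\<A> = UNIV \<and>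
        (\<forall>A\<in>\<A>. \<forall>f\<in>\<F>. ediam (f ` A) \<le> ereal \<epsilon>))"

definition equi_cliquish :: "('a::topological_space \<Rightarrow> 'b::metric_space) set \<Rightarrow> bool" where
  "equi_cliquish \<F> \<longleftrightarrow>
     (\<forall>\<epsilon>>0. \<forall>U. open U \<and> U \<noteq> {} \<longrightarrow>
        (\<exists>V. open V \<and> V \<noteq> {} \<and> V \<subseteq> U \<and> (\<forall>f\<in>\<F>. ediam (f ` V) < ereal \<epsilon>)))"

definition equi_Baire1 :: "('a::metric_space \<Rightarrow> 'b::metric_space) set \<Rightarrow> bool" where
  "equi_Baire1 \<F> \<longleftrightarrow>
     (\<forall>\<epsilon>>0. \<exists>\<delta>::'a \<Rightarrow> real. (\<forall>x. \<delta> x > 0) \<and>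
        (\<forall>x y. \<forall>f\<in>\<F>. dist x y < min (\<delta> x) (\<delta> y) \<longrightarrow> dist (f x) (f y) < \<epsilon>))"

end

theory Submission
  imports Defs
begin

text \<open>A countable cover of a nonempty open set \<open>U\<close> of a
  Baire space has a member that is dense in some nonempty open \<open>V \<subseteq> U\<close>. For (1) the cover is
  \<open>\<Union>\<A>\<^sub>n\<close>, \<open>n \<in> \<nat>\<close>, where \<open>\<A> = \<Union>\<^sub>n \<A>\<^sub>n\<close> is a \<open>\<sigma>\<close>-discrete closed cover on whose
  members every \<open>f \<in> \<F>\<close> varies by at most \<open>\<epsilon>/2\<close>; the union of a discrete family of closed
  sets is closed, so \<open>V \<subseteq> \<Union>\<A>\<^sub>n\<close>, and discreteness shrinks \<open>V\<close> into a single member.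
  For (2) the cover is \<open>E\<^sub>n = {x. \<delta>(x) > 1/(n+1)}\<close> with \<open>\<delta>\<close> the gauge for \<open>\<epsilon>/4\<close>: on a ball of
  radius \<open>1/(2(n+1))\<close> inside \<open>V\<close> any two points of \<open>E\<^sub>n\<close> are \<open>\<delta>\<close>-close to each other, and
  every point of the ball is \<open>\<delta>\<close>-close to a point of \<open>E\<^sub>n\<close> in the ball, so each \<open>f \<in> \<G>\<close>
  varies by at most \<open>3\<epsilon>/4\<close> on it.\<close>

lemma baire_space_cover_somewhere_dense:
  fixes U :: "'a::topological_space set" and E :: "nat \<Rightarrow> 'a set"
  assumes "baire_space TYPE('a)" "open U" "U \<noteq> {}" "U \<subseteq> (\<Union>n. E n)"
  obtains n V where "open V" "V \<noteq> {}" "V \<subseteq> U" "V \<subseteq> closure (E n)"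
proof -
  have "\<exists>n. \<not> nowhere_dense (U \<inter> E n)"
  proof (rule ccontr)
    assume "\<nexists>n. \<not> nowhere_dense (U \<inter> E n)"
    then have "meager U"
      unfolding meager_def using assms(4)
      by (intro exI[of _ "range (\<lambda>n. U \<inter> E n)"]) auto
    then show False
      using assms(1-3) unfolding baire_space_def by blast
  qed
  then obtain n where n: "interior (closure (U \<inter> E n)) \<noteq> {}"
    unfolding nowhere_dense_def by blast
  define V where "V = U \<inter> interior (closure (U \<inter> E n))"
  have "V \<noteq> {}"
    using n open_Int_closure_eq_empty[OF open_interior, of _ U] interior_subset
      closure_mono[of "U \<inter> E n" U]
    unfolding V_def by blast
  moreover have "V \<subseteq> closure (E n)"
    unfolding V_def using interior_subset closure_mono[of "U \<inter> E n" "E n"] by blast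
  ultimately show thesis
    using that[of V n] assms(2) unfolding V_def by auto
qed

lemma ediam_leI:
  assumes "\<And>p q. p \<in> S \<Longrightarrow> q \<in> S \<Longrightarrow> dist p q \<le> c"
  shows "ediam S \<le> ereal c"
  unfolding ediam_def using assms by (intro SUP_least) auto

lemma ediam_mono: "S \<subseteq> T \<Longrightarrow> ediam S \<le> ediam T"
  unfolding ediam_def by (rule SUP_subset_mono) auto

lemma discrete_familyE:
  assumes "discrete_family D"
  obtains N where "open N" "x \<in> N"
    "\<And>A B. A \<in> D \<Longrightarrow> B \<in> D \<Longrightarrow> A \<inter> N \<noteq> {} \<Longrightarrow> B \<inter> N \<noteq> {} \<Longrightarrow> A = B"
  using assms unfolding discrete_family_def by metis

lemma closed_Union_discrete_family:
  assumes "discrete_family D" "\<And>A. A \<in> D \<Longrightarrow> closed A"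
  shows "closed (\<Union>D)"
  unfolding closed_def
proof (subst open_subopen, intro ballI)
  fix x assume "x \<in> - \<Union>D"
  obtain N where N: "open N" "x \<in> N"
    and single: "\<And>A B. A \<in> D \<Longrightarrow> B \<in> D \<Longrightarrow> A \<inter> N \<noteq> {} \<Longrightarrow> B \<inter> N \<noteq> {} \<Longrightarrow> A = B"
    using discrete_familyE[OF assms(1)] by blast
  show "\<exists>T. open T \<and> x \<in> T \<and> T \<subseteq> - \<Union>D"
  proof (cases "\<exists>A\<in>D. A \<inter> N \<noteq> {}")
    case True
    then obtain A where A: "A \<in> D" "A \<inter> N \<noteq> {}" by blast
    have "N - A \<subseteq> - \<Union>D"
      using single A by blast
    moreover have "open (N - A)"
      using N(1) assms(2)[OF A(1)] by auto
    ultimately show ?thesis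
      using N(2) \<open>x \<in> - \<Union>D\<close> A(1) by blast
  next
    case False
    then show ?thesis using N by blast
  qed
qed

lemma discrete_family_open_subset_member:
  assumes "discrete_family D" "open V" "V \<noteq> {}" "V \<subseteq> \<Union>D"
  obtains A W where "A \<in> D" "open W" "W \<noteq> {}" "W \<subseteq> V" "W \<subseteq> A"
proof -
  obtain x A where x: "x \<in> V" "x \<in> A" "A \<in> D"
    using assms(3,4) by blast
  obtain N where N: "open N" "x \<in> N"
    and single: "\<And>A B. A \<in> D \<Longrightarrow> B \<in> D \<Longrightarrow> A \<inter> N \<noteq> {} \<Longrightarrow> B \<inter> N \<noteq> {} \<Longrightarrow> A = B"
    using discrete_familyE[OF assms(1)] by blast
  have "V \<inter> N \<subseteq> A"
    using assms(4) single[of _ A] x N(2) by blast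
  then show thesis
    using that[of A "V \<inter> N"] x N assms(2) by blast
qed

lemma equi_GLP_imp_equi_cliquish:
  fixes \<F> :: "('a::topological_space \<Rightarrow> 'b::metric_space) set"
  assumes baire: "baire_space TYPE('a)" and "equi_GLP \<F>"
  shows "equi_cliquish \<F>"
  unfolding equi_cliquish_def
proof (intro allI impI)
  fix \<epsilon> :: real and U :: "'a set"
  assume "\<epsilon> > 0" and "open U \<and> U \<noteq> {}"
  then have U: "open U" "U \<noteq> {}" and "\<epsilon>/2 > 0" by auto
  obtain \<A> where "sigma_discrete \<A>" and closed: "\<forall>A\<in>\<A>. closed A" and "\<Union>\<A> = UNIV"
    and small: "\<forall>A\<in>\<A>. \<forall>f\<in>\<F>. ediam (f ` A) \<le> ereal (\<epsilon>/2)"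
    using \<open>equi_GLP \<F>\<close>[unfolded equi_GLP_def, rule_format, OF \<open>\<epsilon>/2 > 0\<close>] by blast
  from \<open>sigma_discrete \<A>\<close> obtain D :: "nat \<Rightarrow> 'a set set"
    where D: "\<And>n. discrete_family (D n)" "\<A> = (\<Union>n. D n)"
    unfolding sigma_discrete_def by blast
  have "U \<subseteq> (\<Union>n. \<Union>(D n))"
    using \<open>\<Union>\<A> = UNIV\<close> D(2) by blast
  then obtain n V where V: "open V" "V \<noteq> {}" "V \<subseteq> U" "V \<subseteq> closure (\<Union>(D n))"
    by (rule baire_space_cover_somewhere_dense[OF baire U])
  have "closed (\<Union>(D n))"
    using closed D(2) by (intro closed_Union_discrete_family[OF D(1)]) blast
  then have "V \<subseteq> \<Union>(D n)"
    using V(4) by (simp add: closure_closed)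
  then obtain A W where W: "A \<in> D n" "open W" "W \<noteq> {}" "W \<subseteq> V" "W \<subseteq> A"
    by (rule discrete_family_open_subset_member[OF D(1) V(1,2)])
  have "ediam (f ` W) < ereal \<epsilon>" if "f \<in> \<F>" for f
  proof -
    have "ediam (f ` W) \<le> ediam (f ` A)"
      using W(5) by (intro ediam_mono) auto
    also have "\<dots> \<le> ereal (\<epsilon>/2)"
      using small W(1) D(2) that by blast
    also have "\<dots> < ereal \<epsilon>"
      using \<open>\<epsilon> > 0\<close> by simp
    finally show ?thesis .
  qed
  then show "\<exists>V. open V \<and> V \<noteq> {} \<and> V \<subseteq> U \<and> (\<forall>f\<in>\<F>. ediam (f ` V) < ereal \<epsilon>)"
    using W V(3) by blast
qed

lemma gauge_oscillation_on_ball: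
  fixes f :: "'a::metric_space \<Rightarrow> 'b::metric_space"
  assumes gauge: "\<And>y z. dist y z < min (\<delta> y) (\<delta> z) \<Longrightarrow> dist (f y) (f z) < \<epsilon>"
    and pos: "\<And>y. \<delta> y > 0"
    and dense: "ball x r \<subseteq> closure {y. \<delta> y > c}"
    and radius: "r \<le> c / 2"
  shows "ediam (f ` ball x r) \<le> ereal (3 * \<epsilon>)"
proof -
  let ?S = "ball x r \<inter> {y. \<delta> y > c}"
  have near: "\<exists>y'\<in>?S. dist (f y) (f y') < \<epsilon>" if "y \<in> ball x r" for y
  proof -
    have "c > 0"
      using that radius zero_le_dist[of x y] unfolding mem_ball by linarith
    let ?N = "ball y (min (\<delta> y) c) \<inter> ball x r"
    have "open ?N"
      by (intro open_Int open_ball)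
    moreover have "y \<in> ?N \<inter> closure {y. \<delta> y > c}"
      using that dense pos[of y] \<open>c > 0\<close> by auto
    ultimately have "?N \<inter> {y. \<delta> y > c} \<noteq> {}"
      using open_Int_closure_eq_empty[of ?N "{y. \<delta> y > c}"] by blast
    then obtain y' where "y' \<in> ?N" "y' \<in> {y. \<delta> y > c}"
      by blast
    then have "y' \<in> ?S" "dist y y' < min (\<delta> y) (\<delta> y')"
      by auto
    then show ?thesis
      using gauge by blast
  qed
  have close: "dist (f y') (f z') < \<epsilon>" if "y' \<in> ?S" "z' \<in> ?S" for y' z'
  proof -
    have "dist y' z' < 2 * r"
      using that dist_triangle_less_add[of y' x r z' r] by (simp add: dist_commute)
    then show ?thesis
      using that radius gauge by force
  qed
  show ?thesis
  proof (rule ediam_leI, clarify)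
    fix y z assume "y \<in> ball x r" "z \<in> ball x r"
    then obtain y' z' where "y' \<in> ?S" "z' \<in> ?S"
      and "dist (f y) (f y') < \<epsilon>" "dist (f z) (f z') < \<epsilon>"
      using near by blast
    with close[of y' z'] show "dist (f y) (f z) \<le> 3 * \<epsilon>"
      using dist_triangle[of "f y" "f z" "f y'"] dist_triangle[of "f y'" "f z" "f z'"]
      by (simp add: dist_commute)
  qed
qed

lemma equi_Baire1_imp_equi_cliquish:
  fixes \<G> :: "('c::metric_space \<Rightarrow> 'd::metric_space) set"
  assumes baire: "baire_space TYPE('c)" and "equi_Baire1 \<G>"
  shows "equi_cliquish \<G>"
  unfolding equi_cliquish_def
proof (intro allI impI)
  fix \<epsilon> :: real and U :: "'c set"
  assume "\<epsilon> > 0" and "open U \<and> U \<noteq> {}"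
  then have U: "open U" "U \<noteq> {}" and "\<epsilon>/4 > 0" by auto
  then obtain \<delta> :: "'c \<Rightarrow> real" where "\<forall>x. \<delta> x > 0"
    and "\<forall>x y. \<forall>f\<in>\<G>. dist x y < min (\<delta> x) (\<delta> y) \<longrightarrow> dist (f x) (f y) < \<epsilon>/4"
    using \<open>equi_Baire1 \<G>\<close> unfolding equi_Baire1_def by blast
  then have pos: "\<And>x. \<delta> x > 0"
    and gauge: "\<And>x y f. f \<in> \<G> \<Longrightarrow> dist x y < min (\<delta> x) (\<delta> y) \<Longrightarrow> dist (f x) (f y) < \<epsilon>/4"
    by blast+
  have "U \<subseteq> (\<Union>n. {x. \<delta> x > 1 / real (Suc n)})"
  proof
    fix x
    obtain n where "inverse (real (Suc n)) < \<delta> x"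
      using reals_Archimedean[OF pos] by blast
    then show "x \<in> (\<Union>n. {x. \<delta> x > 1 / real (Suc n)})"
      by (auto simp: inverse_eq_divide)
  qed
  then obtain n V where V: "open V" "V \<noteq> {}" "V \<subseteq> U" "V \<subseteq> closure {x. \<delta> x > 1 / real (Suc n)}"
    by (rule baire_space_cover_somewhere_dense[OF baire U])
  obtain x where "x \<in> V"
    using V(2) by blast
  then obtain r where "r > 0" "ball x r \<subseteq> V"
    by (rule openE[OF V(1)])
  define r' where "r' = min r (1 / real (Suc n) / 2)"
  have "ball x r' \<subseteq> V" "r' > 0"
    using \<open>r > 0\<close> \<open>ball x r \<subseteq> V\<close> unfolding r'_def by auto
  have "r' \<le> 1 / real (Suc n) / 2"
    unfolding r'_def by (rule min.cobounded2)
  have "ediam (f ` ball x r') < ereal \<epsilon>" if "f \<in> \<G>" for f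
  proof -
    have "ball x r' \<subseteq> closure {x. \<delta> x > 1 / real (Suc n)}"
      using \<open>ball x r' \<subseteq> V\<close> V(4) by blast
    then have "ediam (f ` ball x r') \<le> ereal (3 * (\<epsilon>/4))"
      by (intro gauge_oscillation_on_ball[where \<delta> = \<delta> and c = "1 / real (Suc n)"]
          gauge[OF that] pos \<open>r' \<le> 1 / real (Suc n) / 2\<close>)
    also have "\<dots> < ereal \<epsilon>"
      using \<open>\<epsilon> > 0\<close> by simp
    finally show ?thesis .
  qed
  then show "\<exists>V. open V \<and> V \<noteq> {} \<and> V \<subseteq> U \<and> (\<forall>f\<in>\<G>. ediam (f ` V) < ereal \<epsilon>)"
    using \<open>ball x r' \<subseteq> V\<close> \<open>r' > 0\<close> V(3)
    by (intro exI[of _ "ball x r'"]) auto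
qed

theorem proposition3p6:
  fixes \<F> :: "('a::topological_space \<Rightarrow> 'b::metric_space) set"
    and \<G> :: "('c::metric_space \<Rightarrow> 'd::metric_space) set"
  shows "(baire_space TYPE('a) \<longrightarrow> equi_GLP \<F> \<longrightarrow> equi_cliquish \<F>)
       \<and> (baire_space TYPE('c) \<longrightarrow> equi_Baire1 \<G> \<longrightarrow> equi_cliquish \<G>)"
  using equi_GLP_imp_equi_cliquish equi_Baire1_imp_equi_cliquish by blast

end
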